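(* Let $\mathcal{A}=(T(\Sigma,X),\Rightarrow_\Pi)$ be an abstract reduction system closed under substitutions, and let $(u_1\Rightarrow_{w_1}v_1,\ u_2\Rightarrow_{w_2}v_2)$ be a recurrent pair in $\mathcal{A}$, with $c_1,c_2,x,y,s,t,n_1,n_2,n_3,n_4$ as in the definition of recurrent pair. Then for all $m\in\mathbb{N}$, $c_1[m,n_2]\Rightarrow_{w_2}c_1[m'+n_3,\ m+n_4]$, where $m'=0$ if $t=s$ and $m'=m$ if $t=x$.
   Context: Fix a signature $\Sigma$, a countably infinite set $X$ of variables disjoint from $\Sigma$, and two distinct fresh hole constants $\square,\square'\notin\Sigma\cup X$. Terms are elements of $T(\Sigma,X)$; substitutions $\theta$ (maps $X\to T(\Sigma,X)$ moving finitely many variables) act homomorphically; $\mathit{Var}$ denotes the variable set. An abstract reduction system $(A,\Rightarrow_\Pi)$ has $\Rightarrow_\Pi=\bigcup_{\pi\in\Pi}\Rightarrow_\pi$; for $w=\langle\pi_1,\dots,\pi_k\rangle\in\Pi^*$, $\Rightarrow_w=\Rightarrow_{\pi_1}\circ\cdots\circ\Rightarrow_{\pi_k}$ ($\Rightarrow_\epsilon$ the identity). It is closed under substitutions if for all $s,t\in A$, $w\in\Pi^*$ and substitutions $\theta$, $s\Rightarrow_w t$ implies $s\theta\Rightarrow_w t\theta$. Let $c_1$ be a term over $\Sigma\cup\{\square,\square'\}$ and $X$ containing at least one occurrence of $\square$ and of $\square'$, and $c_1[t,t']$ the result of replacing all $\square$ by $t$ and all $\square'$ by $t'$. Let $c_2$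 be a term over $\Sigma\cup\{\square\}$ and $X$ containing at least one $\square$ (and no $\square'$), $c_2[t]$ the result of replacing all $\square$ by $t$, $c_2^0[t]=t$, $c_2^{k+1}[t]=c_2[c_2^k[t]]$. A recurrent pair in $\mathcal{A}$ is a pair of chains $u_1\Rightarrow_{w_1}v_1$ and $u_2\Rightarrow_{w_2}v_2$ ($w_1,w_2\in\Pi^*$) such that: $u_1=c_1[x,c_2[y]]$, $v_1=c_1[c_2^{n_1}[x],y]$, $u_2=c_1[x,c_2^{n_2}[s]]$, $v_2=c_1[c_2^{n_3}[t],c_2^{n_4}[x]]$ for variables $x\neq y$ with $\{x,y\}\cap\mathit{Var}(c_1)=\emptyset$, a term $s$, naturals $n_1,n_2,n_3,n_4$; $\mathit{Var}(c_2)=\mathit{Var}(s)=\emptyset$; $t\in\{x,s\}$; and $n_4\ge n_2$. For $m,n\in\mathbb{N}$, $c_1[m,n]$ denotes the term $c_1[c_2^m[s],c_2^n[s]]$. *)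

theory Defs
  imports Main "HOL-Library.Countable_Set"
begin

datatype ('f, 'v) "term" = Var 'v | Fun 'f "('f, 'v) term list"

fun vars :: "('f, 'v) term \<Rightarrow> 'v set" where
  "vars (Var x) = {x}"
| "vars (Fun f ts) = (\<Union>t \<in> set ts. vars t)"

fun subst :: "('v \<Rightarrow> ('f, 'v) term) \<Rightarrow> ('f, 'v) term \<Rightarrow> ('f, 'v) term" where
  "subst \<theta> (Var x) = \<theta> x"
| "subst \<theta> (Fun f ts) = Fun f (map (subst \<theta>) ts)"

definition is_subst :: "('v \<Rightarrow> ('f, 'v) term) \<Rightarrow> bool" where
  "is_subst \<theta> \<longleftrightarrow> finite {x. \<theta> x \<noteq> Var x}"

(* terms over Sigma \<union> {Box, Box'} and X; Box and Box' are the hole constants *)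
datatype ('f, 'v) hterm = HVar 'v | HFun 'f "('f, 'v) hterm list" | Box | Box'

fun hvars :: "('f, 'v) hterm \<Rightarrow> 'v set" where
  "hvars (HVar x) = {x}"
| "hvars (HFun f ts) = (\<Union>t \<in> set ts. hvars t)"
| "hvars Box = {}"
| "hvars Box' = {}"

fun has_box :: "('f, 'v) hterm \<Rightarrow> bool" where
  "has_box (HVar x) = False"
| "has_box (HFun f ts) = (\<exists>t \<in> set ts. has_box t)"
| "has_box Box = True"
| "has_box Box' = False"

fun has_box' :: "('f, 'v) hterm \<Rightarrow> bool" where
  "has_box' (HVar x) = False"
| "has_box' (HFun f ts) = (\<exists>t \<in> set ts. has_box' t)"
| "has_box' Box = False"
| "has_box' Box' = True"

(* fill c t t' = c[t,t']: replace every Box by t and every Box' by t' *)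
fun fill :: "('f, 'v) hterm \<Rightarrow> ('f, 'v) term \<Rightarrow> ('f, 'v) term \<Rightarrow> ('f, 'v) term" where
  "fill (HVar x) t t' = Var x"
| "fill (HFun f cs) t t' = Fun f (map (\<lambda>c. fill c t t') cs)"
| "fill Box t t' = t"
| "fill Box' t t' = t'"

(* for a one-hole-kind context c (no Box'): c[t] and c^k[t] *)
definition fill1 :: "('f, 'v) hterm \<Rightarrow> ('f, 'v) term \<Rightarrow> ('f, 'v) term" where
  "fill1 c t = fill c t t"

definition cpow :: "('f, 'v) hterm \<Rightarrow> nat \<Rightarrow> ('f, 'v) term \<Rightarrow> ('f, 'v) term" where
  "cpow c k t = (fill1 c ^^ k) t"

(* abstract reduction system: step p = \<Rightarrow>_p for p \<in> Pi (the type 'p);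
   steps step w = \<Rightarrow>_w, with steps step [] the identity *)
fun steps :: "('p \<Rightarrow> 'a \<Rightarrow> 'a \<Rightarrow> bool) \<Rightarrow> 'p list \<Rightarrow> 'a \<Rightarrow> 'a \<Rightarrow> bool" where
  "steps step [] = (=)"
| "steps step (p # w) = step p OO steps step w"

definition closed_under_subst :: "('p \<Rightarrow> ('f, 'v) term \<Rightarrow> ('f, 'v) term \<Rightarrow> bool) \<Rightarrow> bool" where
  "closed_under_subst step \<longleftrightarrow>
     (\<forall>s t w \<theta>. is_subst \<theta> \<longrightarrow> steps step w s t \<longrightarrow> steps step w (subst \<theta> s) (subst \<theta> t))"

end

theory Submission
  imports Defs
begin

text \<open>Instantiating \<open>x\<close> by the ground term \<open>c\<^sub>2\<^sup>m[s]\<close> in the second chain of the recurrent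
  pair leaves \<open>c\<^sub>1\<close>, \<open>c\<^sub>2\<close> and \<open>s\<close> untouched and turns \<open>c\<^sub>2\<^sup>n\<^sup>4[x]\<close> into \<open>c\<^sub>2\<^sup>m\<^sup>+\<^sup>n\<^sup>4[s]\<close>;
  closure under substitutions then yields the claimed chain.\<close>

lemma is_subst_Var_upd: "is_subst (Var(x := u))"
  unfolding is_subst_def by (rule finite_subset[of _ "{x}"]) auto

lemma subst_ground: "vars u = {} \<Longrightarrow> subst \<theta> u = u"
proof (induction u)
  case (Fun f ts)
  then show ?case by (auto intro: map_idI)
qed simp

lemma subst_fill:
  "\<forall>z \<in> hvars c. \<theta> z = Var z \<Longrightarrow>
   subst \<theta> (fill c a b) = fill c (subst \<theta> a) (subst \<theta> b)"
  by (induction c) auto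

lemma subst_cpow: "hvars c = {} \<Longrightarrow> subst \<theta> (cpow c k u) = cpow c k (subst \<theta> u)"
  by (induction k) (auto simp: cpow_def fill1_def subst_fill)

lemma cpow_cpow: "cpow c a (cpow c b u) = cpow c (a + b) u"
  by (simp add: cpow_def funpow_add)

lemma steps_subst:
  assumes "closed_under_subst step" "is_subst \<theta>" "steps step w u v"
  shows "steps step w (subst \<theta> u) (subst \<theta> v)"
  using assms unfolding closed_under_subst_def by blast

theorem lemma11:
  fixes step :: "'p \<Rightarrow> ('f, 'v) term \<Rightarrow> ('f, 'v) term \<Rightarrow> bool"
    and c1 c2 :: "('f, 'v) hterm"
    and x y :: 'v
    and s t :: "('f, 'v) term"
    and n1 n2 n3 n4 :: nat
    and w1 w2 :: "'p list"
  assumes X_inf: "infinite (UNIV :: 'v set)"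
    and X_count: "countable (UNIV :: 'v set)"
    and closed: "closed_under_subst step"
    and c1_holes: "has_box c1" "has_box' c1"
    and c2_holes: "has_box c2" "\<not> has_box' c2"
    and xy: "x \<noteq> y" "x \<notin> hvars c1" "y \<notin> hvars c1"
    and ground: "hvars c2 = {}" "vars s = {}"
    and t_cases: "t = Var x \<or> t = s"
    and n4_n2: "n4 \<ge> n2"
    and chain1: "steps step w1 (fill c1 (Var x) (fill1 c2 (Var y)))
                               (fill c1 (cpow c2 n1 (Var x)) (Var y))"
    and chain2: "steps step w2 (fill c1 (Var x) (cpow c2 n2 s))
                               (fill c1 (cpow c2 n3 t) (cpow c2 n4 (Var x)))"
  shows "\<forall>m::nat. let m' = (if t = s then 0 else m) in
           steps step w2 (fill c1 (cpow c2 m s) (cpow c2 n2 s))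
                         (fill c1 (cpow c2 (m' + n3) s) (cpow c2 (m + n4) s))"
proof
  fix m :: nat
  define \<theta> :: "'v \<Rightarrow> ('f, 'v) term" where "\<theta> = Var(x := cpow c2 m s)"
  have \<theta>_c1: "\<forall>z \<in> hvars c1. \<theta> z = Var z"
    using xy(2) by (auto simp: \<theta>_def)
  have "steps step w2 (subst \<theta> (fill c1 (Var x) (cpow c2 n2 s)))
                      (subst \<theta> (fill c1 (cpow c2 n3 t) (cpow c2 n4 (Var x))))"
    using steps_subst[OF closed _ chain2] by (simp add: \<theta>_def is_subst_Var_upd)
  then have inst: "steps step w2 (fill c1 (cpow c2 m s) (cpow c2 n2 s))
                                 (fill c1 (cpow c2 n3 (subst \<theta> t)) (cpow c2 (m + n4) s))"
    using ground by (simp add: subst_fill[OF \<theta>_c1] subst_cpow subst_ground)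
      (simp add: \<theta>_def cpow_cpow add.commute)
  have "cpow c2 n3 (subst \<theta> t) = cpow c2 ((if t = s then 0 else m) + n3) s"
    using t_cases ground(2) by (auto simp: subst_ground \<theta>_def cpow_cpow add.commute)
  with inst show "let m' = (if t = s then 0 else m) in
      steps step w2 (fill c1 (cpow c2 m s) (cpow c2 n2 s))
                    (fill c1 (cpow c2 (m' + n3) s) (cpow c2 (m + n4) s))"
    by simp
qed

end
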